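(* Assume (A1), (A2), (A3), (A4) and let $0<\lambda<\lambda_{\max}$, $T=\lfloor1/\lambda\rfloor$. Then for all $n\in\mathbb{N}$ and $k\in\{1,\dots,T\}$, \[ \mathbb{E}\big|H(\theta^\lambda_{nT+k-1},X_{nT+k})-h(\theta^\lambda_{nT+k-1})\big|^2\le e^{-a\lambda nT}\bar\sigma_Z\mathbb{E}[V_2(\theta_0)]+\tilde\sigma_Z, \] where $\bar\sigma_Z=4\mathbb{E}[K_\rho(X_0)](L^2+L_1^2)$ and $\tilde\sigma_Z=4\mathbb{E}[K_\rho(X_0)](L^2+L_1^2)c_1(\lambda_{\max}+a^{-1})+4|h(0)|^2+8L_2^2\mathbb{E}[K_\rho(X_0)]+8\mathbb{E}[F_*^2(X_0)]$.
   Context: Let $d,m\ge1$ be integers and $\beta>0$. On a probability space, let $\theta_0$ be an $\mathbb{R}^d$-valued random variable, $(X_n)_{n\in\mathbb{N}}$ an i.i.d. sequence of $\mathbb{R}^m$-valued random variables, and $(\xi_n)_{n\ge1}$ an i.i.d. sequence of standard Gaussian vectors in $\mathbb{R}^d$, with $\theta_0$, $(X_n)$, $(\xi_n)$ mutually independent. Let $H:\mathbb{R}^d\times\mathbb{R}^m\to\mathbb{R}^d$ be measurable with $\mathbb{E}|H(\theta,X_0)|<\infty$ for all $\theta$, and put $h(\theta)=\mathbb{E}[H(\theta,X_0)]$. For step size $\lambda>0$ the SGLD algorithm is $\theta^\lambda_0=\theta_0$, $\theta^\lambda_{n+1}=\theta^\lambda_n-\lambda H(\theta^\lambda_n,X_{n+1})+\sqrt{2\lambda/\beta}\,\xi_{n+1}$.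 $V_2(\theta)=1+|\theta|^2$. For $x\in\mathbb{R}^m$, $K_\rho(x)=(1+2|x|)^{4\rho+4}$. (A1) $H=F+G$ with $F,G:\mathbb{R}^d\times\mathbb{R}^m\to\mathbb{R}^d$; there are $L_1,L_2>0$, $\rho\ge0$ with $|F(\theta,x)-F(\theta',x')|\le(1+|x|+|x'|)^\rho(L_1|\theta-\theta'|+L_2|x-x'|)$ for all $\theta,\theta'\in\mathbb{R}^d$, $x,x'\in\mathbb{R}^m$, and there is $K_1:\mathbb{R}^m\to[0,\infty)$ with $|G(\theta,x)|\le K_1(x)$ for all $\theta,x$. Set $F_*(x)=|F(0,0)|+K_1(x)$. (A2) $\mathbb{E}|\theta_0|^4<\infty$, $\mathbb{E}|X_0|^{4\rho+4}<\infty$, $\mathbb{E}[K_1(X_0)^4]<\infty$. (A3) There is $L>0$ with $\mathbb{E}|H(\theta,X_0)-H(\theta',X_0)|\le L|\theta-\theta'|$ for all $\theta,\theta'$. (A4) There are $A:\mathbb{R}^m\to\mathbb{R}^{d\times d}$ with $\langle y,A(x)y\rangle\ge0$ for all $x\in\mathbb{R}^m,y\in\mathbb{R}^d$, and $b:\mathbb{R}^m\to\mathbb{R}$, such that $\langle F(\theta,x),\theta\rangle\ge\langle\theta,A(x)\theta\rangle-b(x)$ for all $\theta,x$; the smallest eigenvalue $a$ of $\mathbb{E}[A(X_0)]$ is positive and $b:=\mathbb{E}[b(X_0)]>0$. $\lambda_{\max}=\min\Big\{\dfrac{\min\{a,a^{1/3}\}}{24(1+L_1)^2\mathbb{E}[K_\rho(X_0)]},\dfrac{1}{4a}\Big\}$;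 $c_1=c_0+2d/\beta$ with $c_0=8\mathbb{E}[K_1^2(X_0)]a^{-1}+2b+4\lambda_{\max}L_2^2\mathbb{E}[K_\rho(X_0)]+4\lambda_{\max}\mathbb{E}[F_*^2(X_0)]$. *)

theory Defs
  imports "HOL-Probability.Probability"
begin

text \<open>Indices for the family (theta_0, X_n, xi_n) whose mutual independence is assumed.\<close>
datatype sgld_idx = Init | Dat nat | Noise nat

definition gen_events :: "'w measure \<Rightarrow> ('w \<Rightarrow> 'b::topological_space) \<Rightarrow> 'w set set" where
  "gen_events M f = {f -` A \<inter> space M | A. A \<in> sets borel}"

definition std_gaussian_vec :: "'w measure \<Rightarrow> ('w \<Rightarrow> real^'d) \<Rightarrow> bool" where
  "std_gaussian_vec M \<xi> \<longleftrightarrow>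
     \<xi> \<in> borel_measurable M \<and>
     prob_space.indep_vars M (\<lambda>_. borel) (\<lambda>i \<omega>. \<xi> \<omega> $ i) UNIV \<and>
     (\<forall>i. distributed M lborel (\<lambda>\<omega>. \<xi> \<omega> $ i) (\<lambda>x. ennreal (std_normal_density x)))"

definition is_eigenvalue :: "real^'n^'n \<Rightarrow> real \<Rightarrow> bool" where
  "is_eigenvalue A \<mu> \<longleftrightarrow> (\<exists>v. v \<noteq> 0 \<and> A *v v = \<mu> *\<^sub>R v)"

definition smallest_eigenvalue :: "real^'n^'n \<Rightarrow> real \<Rightarrow> bool" where
  "smallest_eigenvalue A a \<longleftrightarrow> is_eigenvalue A a \<and> (\<forall>\<mu>. is_eigenvalue A \<mu> \<longrightarrow> a \<le> \<mu>)"

primrec sgld :: "(real^'d \<Rightarrow> real^'m \<Rightarrow> real^'d) \<Rightarrow> (nat \<Rightarrow> 'w \<Rightarrow> real^'m) \<Rightarrow>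
    (nat \<Rightarrow> 'w \<Rightarrow> real^'d) \<Rightarrow> real \<Rightarrow> real \<Rightarrow> ('w \<Rightarrow> real^'d) \<Rightarrow> nat \<Rightarrow> 'w \<Rightarrow> real^'d" where
  "sgld H X \<xi> \<beta> lam \<theta>0 0 = \<theta>0"
| "sgld H X \<xi> \<beta> lam \<theta>0 (Suc n) = (\<lambda>\<omega>.
     sgld H X \<xi> \<beta> lam \<theta>0 n \<omega> - lam *\<^sub>R H (sgld H X \<xi> \<beta> lam \<theta>0 n \<omega>) (X (Suc n) \<omega>)
     + sqrt (2 * lam / \<beta>) *\<^sub>R \<xi> (Suc n) \<omega>)"

definition V2 :: "real^'d \<Rightarrow> real" where
  "V2 \<theta> = 1 + (norm \<theta>)\<^sup>2"

definition K_rho :: "real \<Rightarrow> real^'m \<Rightarrow> real" where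
  "K_rho \<rho> x = (1 + 2 * norm x) powr (4 * \<rho> + 4)"

end

theory Submission
  imports Defs
begin

text \<open>The iterate \<open>\<theta>\<^sub>j\<close> is a function of \<open>\<theta>\<^sub>0, X\<^sub>1, \<dots>, X\<^sub>j, \<xi>\<^sub>1, \<dots>, \<xi>\<^sub>j\<close> only, hence independent
  of \<open>X\<^sub>j\<^sub>+\<^sub>1\<close>, which has the law of \<open>X\<^sub>0\<close>. Integrating out \<open>X\<^sub>j\<^sub>+\<^sub>1\<close> first reduces the claim to the
  variance of \<open>H(t, X\<^sub>0)\<close> for a fixed parameter \<open>t\<close>. By (A1),
  \<open>|H(t,x) - F(t,0)| \<le> L\<^sub>2 (1 + 2|x|)\<^bsup>2\<rho>+2\<^esup> + F\<^sub>*(x)\<close> uniformly in \<open>t\<close>, and a centred second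
  moment is at most four times the second moment of any bound on the distance to a fixed centre.
  This gives the \<open>t\<close>-uniform bound \<open>8 L\<^sub>2\<^sup>2 E K\<^sub>\<rho>(X\<^sub>0) + 8 E F\<^sub>*\<^sup>2(X\<^sub>0)\<close>, which is already one of
  the summands of \<open>stilde\<close>; no moment bound on the iterates is needed.\<close>

lemma gen_events_subset_Pow: "gen_events M f \<subseteq> Pow (space M)"
  unfolding gen_events_def by auto

lemma gen_events_Int_stable: "Int_stable (gen_events M f)"
  unfolding Int_stable_def gen_events_def
proof clarify
  fix A B :: "'b set" assume "A \<in> sets borel" "B \<in> sets borel"
  then show "\<exists>C. (f -` A \<inter> space M) \<inter> (f -` B \<inter> space M) = f -` C \<inter> space M \<and> C \<in> sets borel"
    by (intro exI[of _ "A \<inter> B"]) auto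
qed

lemma measurable_sigma_gen_events:
  assumes "gen_events M f \<subseteq> S" "S \<subseteq> Pow (space M)"
  shows "f \<in> borel_measurable (sigma (space M) S)"
proof (rule measurableI)
  fix A :: "'b set" assume "A \<in> sets borel"
  then have "f -` A \<inter> space M \<in> S" using assms(1) by (auto simp: gen_events_def)
  then show "f -` A \<inter> space (sigma (space M) S) \<in> sets (sigma (space M) S)"
    using assms(2) by (simp add: sets_measure_of space_measure_of sigma_sets.Basic)
qed auto

lemma gen_events_subset_sigma_sets:
  assumes "f \<in> borel_measurable (sigma (space M) S)" "S \<subseteq> Pow (space M)"
  shows "gen_events M f \<subseteq> sigma_sets (space M) S"
  using measurable_sets[OF assms(1)] assms(2)
  by (auto simp: gen_events_def sets_measure_of space_measure_of)

lemma (in prob_space) indep_set_gen_events_sigma: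
  assumes "indep_set (gen_events M Y) (gen_events M Z)"
  shows "indep_set (sigma_sets (space M) (gen_events M Y)) (sigma_sets (space M) (gen_events M Z))"
proof -
  have "indep_sets (\<lambda>b. sigma_sets (space M) (case_bool (gen_events M Y) (gen_events M Z) b)) UNIV"
    using assms unfolding indep_set_def
    by (intro indep_sets_sigma) (auto split: bool.split simp: gen_events_Int_stable)
  then show ?thesis
    unfolding indep_set_def by (rule indep_sets_cong[THEN iffD1, rotated 2]) (auto split: bool.split)
qed

lemma nn_integral_comp_identically_distributed:
  assumes "distr M borel X = distr M borel Y"
    and "X \<in> borel_measurable M" "Y \<in> borel_measurable M" "g \<in> borel_measurable borel"
  shows "(\<integral>\<^sup>+\<omega>. g (X \<omega>) \<partial>M) = (\<integral>\<^sup>+\<omega>. g (Y \<omega>) \<partial>M)"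
proof -
  have "(\<integral>\<^sup>+\<omega>. g (X \<omega>) \<partial>M) = (\<integral>\<^sup>+x. g x \<partial>distr M borel X)"
    using assms(2,4) by (simp add: nn_integral_distr)
  also have "\<dots> = (\<integral>\<^sup>+\<omega>. g (Y \<omega>) \<partial>M)"
    unfolding assms(1) using assms(3,4) by (simp add: nn_integral_distr)
  finally show ?thesis .
qed

lemma (in prob_space) distr_pair_eq_pair_measure_distr:
  fixes Y :: "'a \<Rightarrow> 'b::topological_space" and Z :: "'a \<Rightarrow> 'c::topological_space"
  assumes Y: "Y \<in> borel_measurable M" and Z: "Z \<in> borel_measurable M"
    and indep: "indep_set (gen_events M Y) (gen_events M Z)"
  shows "distr M (borel \<Otimes>\<^sub>M borel) (\<lambda>\<omega>. (Y \<omega>, Z \<omega>)) = distr M borel Y \<Otimes>\<^sub>M distr M borel Z"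
proof -
  \<comment> \<open>\<open>indep_var\<close> wants a common codomain, so both variables are embedded into \<open>'b \<times> 'c\<close>.\<close>
  define Y' where "Y' \<omega> = (Y \<omega>, undefined :: 'c)" for \<omega>
  define Z' where "Z' \<omega> = (undefined :: 'b, Z \<omega>)" for \<omega>
  let ?P = "borel \<Otimes>\<^sub>M borel :: ('b \<times> 'c) measure"
  have Y'M: "Y' \<in> measurable M ?P" and Z'M: "Z' \<in> measurable M ?P"
    using Y Z unfolding Y'_def Z'_def by (auto intro!: measurable_Pair)
  have events: "{V -` S \<inter> space M | S. S \<in> sets ?P} \<subseteq> sigma_sets (space M) (gen_events M W)"
    if "V \<in> measurable (sigma (space M) (gen_events M W)) ?P" for V and W :: "'a \<Rightarrow> 'e::topological_space"
    using measurable_sets[OF that]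
    by (auto simp: sets_measure_of[OF gen_events_subset_Pow] space_measure_of[OF gen_events_subset_Pow])
  have "Y' \<in> measurable (sigma (space M) (gen_events M Y)) ?P"
    and "Z' \<in> measurable (sigma (space M) (gen_events M Z)) ?P"
    unfolding Y'_def Z'_def
    by (intro measurable_Pair measurable_sigma_gen_events[OF subset_refl gen_events_subset_Pow]; simp)+
  then have "indep_set (sigma_sets (space M) {Y' -` S \<inter> space M | S. S \<in> sets ?P})
                       (sigma_sets (space M) {Z' -` S \<inter> space M | S. S \<in> sets ?P})"
    using indep_set_gen_events_sigma[OF indep] unfolding indep_set_def
    by (elim indep_sets_mono_sets) (auto split: bool.split intro!: sigma_sets_mono events)
  then have "indep_var ?P Y' ?P Z'"
    using Y'M Z'M by (simp add: indep_var_eq)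
  then have joint: "distr M ?P Y' \<Otimes>\<^sub>M distr M ?P Z' = distr M (?P \<Otimes>\<^sub>M ?P) (\<lambda>\<omega>. (Y' \<omega>, Z' \<omega>))"
    by (simp add: indep_var_distribution_eq)
  have "distr M borel Y \<Otimes>\<^sub>M distr M borel Z = distr (distr M ?P Y') borel fst \<Otimes>\<^sub>M distr (distr M ?P Z') borel snd"
    using Y'M Z'M by (simp add: distr_distr comp_def Y'_def Z'_def)
  also have "\<dots> = distr (distr M ?P Y' \<Otimes>\<^sub>M distr M ?P Z') ?P (\<lambda>(p, q). (fst p, snd q))"
    using Y'M Z'M
    by (intro pair_measure_distr prob_space_imp_sigma_finite prob_space.prob_space_distr[OF prob_space_distr])
      auto
  also have "\<dots> = distr M ?P (\<lambda>\<omega>. (Y \<omega>, Z \<omega>))"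
    unfolding joint
    by (subst distr_distr[OF _ measurable_Pair[OF Y'M Z'M]]) (simp_all add: comp_def Y'_def Z'_def)
  finally show ?thesis ..
qed

lemma (in prob_space) nn_integral_indep_le:
  fixes Y :: "'a \<Rightarrow> 'b::topological_space" and Z :: "'a \<Rightarrow> 'c::topological_space"
    and D :: "'b \<times> 'c \<Rightarrow> ennreal"
  assumes Y: "Y \<in> borel_measurable M" and Z: "Z \<in> borel_measurable M"
    and indep: "indep_set (gen_events M Y) (gen_events M Z)"
    and D: "D \<in> borel_measurable (borel \<Otimes>\<^sub>M borel)"
    and bound: "\<And>t. (\<integral>\<^sup>+\<omega>. D (t, Z \<omega>) \<partial>M) \<le> B"
  shows "(\<integral>\<^sup>+\<omega>. D (Y \<omega>, Z \<omega>) \<partial>M) \<le> B"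
proof -
  interpret PY: prob_space "distr M borel Y" using Y by (rule prob_space_distr)
  interpret PZ: prob_space "distr M borel Z" using Z by (rule prob_space_distr)
  have "(\<integral>\<^sup>+\<omega>. D (Y \<omega>, Z \<omega>) \<partial>M) = (\<integral>\<^sup>+p. D p \<partial>distr M (borel \<Otimes>\<^sub>M borel) (\<lambda>\<omega>. (Y \<omega>, Z \<omega>)))"
    using Y Z D by (simp add: nn_integral_distr)
  also have "\<dots> = (\<integral>\<^sup>+s. \<integral>\<^sup>+z. D (s, z) \<partial>distr M borel Z \<partial>distr M borel Y)"
    unfolding distr_pair_eq_pair_measure_distr[OF Y Z indep]
    using D by (intro PZ.nn_integral_fst[symmetric]) (simp cong: measurable_cong_sets)
  also have "\<dots> \<le> (\<integral>\<^sup>+s. B \<partial>distr M borel Y)"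
  proof (rule nn_integral_mono)
    fix s
    have "(\<integral>\<^sup>+z. D (s, z) \<partial>distr M borel Z) = (\<integral>\<^sup>+\<omega>. D (s, Z \<omega>) \<partial>M)"
      using Z measurable_Pair2[OF D, of s] by (simp add: nn_integral_distr)
    then show "(\<integral>\<^sup>+z. D (s, z) \<partial>distr M borel Z) \<le> B" using bound by simp
  qed
  also have "\<dots> = B" using PY.emeasure_space_1 by simp
  finally show ?thesis .
qed

lemma (in prob_space) nn_integral_centered_sq_le:
  fixes Y :: "'a \<Rightarrow> 'b::{banach,second_countable_topology}"
  assumes Y: "integrable M Y" and u: "integrable M u" and u2: "integrable M (\<lambda>x. (u x)\<^sup>2)"
    and bound: "\<And>x. x \<in> space M \<Longrightarrow> norm (Y x - c) \<le> u x"
  shows "(\<integral>\<^sup>+x. ennreal ((norm (Y x - expectation Y))\<^sup>2) \<partial>M) \<le> ennreal (4 * expectation (\<lambda>x. (u x)\<^sup>2))"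
proof -
  let ?Eu = "expectation u"
  have "norm (c - expectation Y) = norm (expectation (\<lambda>y. c - Y y))"
    using Y by (simp add: prob_space)
  also have "\<dots> \<le> expectation (\<lambda>y. norm (c - Y y))" by (rule integral_norm_bound)
  also have "\<dots> \<le> ?Eu"
    using Y u bound by (intro integral_mono) (auto simp: norm_minus_commute)
  finally have c_near_mean: "norm (c - expectation Y) \<le> ?Eu" .
  have "(norm (Y x - expectation Y))\<^sup>2 \<le> 2 * (u x)\<^sup>2 + 2 * ?Eu\<^sup>2" if "x \<in> space M" for x
  proof -
    have "norm (Y x - expectation Y) \<le> norm (Y x - c) + norm (c - expectation Y)"
      using norm_triangle_ineq[of "Y x - c" "c - expectation Y"] by simp
    also have "\<dots> \<le> u x + ?Eu" using bound[OF that] c_near_mean by simp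
    finally have "(norm (Y x - expectation Y))\<^sup>2 \<le> (u x + ?Eu)\<^sup>2"
      by (rule power_mono) simp
    also have "\<dots> \<le> 2 * (u x)\<^sup>2 + 2 * ?Eu\<^sup>2"
      using zero_le_square[of "u x - ?Eu"] by (simp add: power2_eq_square algebra_simps)
    finally show ?thesis .
  qed
  then have "(\<integral>\<^sup>+x. ennreal ((norm (Y x - expectation Y))\<^sup>2) \<partial>M)
      \<le> (\<integral>\<^sup>+x. ennreal (2 * (u x)\<^sup>2 + 2 * ?Eu\<^sup>2) \<partial>M)"
    by (intro nn_integral_mono ennreal_leI) auto
  also have "\<dots> = ennreal (2 * expectation (\<lambda>x. (u x)\<^sup>2) + 2 * ?Eu\<^sup>2)"
    using u2 by (subst nn_integral_eq_integral) (auto simp: prob_space)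
  also have "\<dots> \<le> ennreal (4 * expectation (\<lambda>x. (u x)\<^sup>2))"
    using variance_eq[OF u u2] variance_positive[of u] by (intro ennreal_leI) simp
  finally show ?thesis .
qed

lemma borel_measurable_of_power:
  fixes f :: "'a \<Rightarrow> real"
  assumes "(\<lambda>x. f x ^ n) \<in> borel_measurable M" "0 < n" "\<And>x. f x \<ge> 0"
  shows "f \<in> borel_measurable M"
proof -
  have "(\<lambda>x. root n (f x ^ n)) \<in> borel_measurable M"
    using measurable_compose[OF assms(1) borel_measurable_root] by (simp add: comp_def)
  moreover have "root n (f x ^ n) = f x" for x
    using assms(2,3) by (simp add: real_root_power_cancel)
  ultimately show ?thesis by simp
qed

lemma (in prob_space) integrable_shifted_sq_of_power4:
  fixes f :: "'a \<Rightarrow> real"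
  assumes f4: "integrable M (\<lambda>x. f x ^ 4)" and f[measurable]: "f \<in> borel_measurable M"
  shows "integrable M (\<lambda>x. (c + f x)\<^sup>2)"
proof -
  have f2: "integrable M (\<lambda>x. (f x)\<^sup>2)"
    by (rule square_integrable_imp_integrable) (measurable, use f4 in \<open>simp flip: power_mult\<close>)
  then have "integrable M f"
    by (rule square_integrable_imp_integrable[rotated]) measurable
  with f2 show ?thesis by (simp add: power2_sum)
qed

lemma norm_sub_F_origin_le:
  fixes F G H :: "'t::real_normed_vector \<Rightarrow> 'x::real_normed_vector \<Rightarrow> 'v::real_normed_vector"
  assumes split: "\<And>t x. H t x = F t x + G t x"
    and F: "\<And>t t' x x'. norm (F t x - F t' x')
              \<le> (1 + norm x + norm x') powr \<rho> * (L1 * norm (t - t') + L2 * norm (x - x'))"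
    and G: "\<And>t x. norm (G t x) \<le> K1 x"
    and \<rho>: "\<rho> \<ge> 0" and L2: "L2 \<ge> 0"
  shows "norm (H t x - F t 0) \<le> L2 * (1 + 2 * norm x) powr (2 * \<rho> + 2) + K1 x"
proof -
  have "(1 + norm x) powr \<rho> * norm x \<le> (1 + 2 * norm x) powr \<rho> * (1 + 2 * norm x) powr 1"
    using \<rho> by (intro mult_mono powr_mono2) auto
  also have "\<dots> = (1 + 2 * norm x) powr (\<rho> + 1)" by (simp add: powr_add)
  also have "\<dots> \<le> (1 + 2 * norm x) powr (2 * \<rho> + 2)"
    using \<rho> by (intro powr_mono) auto
  finally have growth: "(1 + norm x) powr \<rho> * norm x \<le> (1 + 2 * norm x) powr (2 * \<rho> + 2)" .
  have "norm (H t x - F t 0) \<le> norm (F t x - F t 0) + norm (G t x)"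
    using norm_triangle_ineq[of "F t x - F t 0" "G t x"] by (simp add: split algebra_simps)
  also have "\<dots> \<le> L2 * ((1 + norm x) powr \<rho> * norm x) + K1 x"
    using F[of t x t 0] G[of t x] by (simp add: algebra_simps)
  also have "\<dots> \<le> L2 * (1 + 2 * norm x) powr (2 * \<rho> + 2) + K1 x"
    using growth L2 by (simp add: mult_left_mono)
  finally show ?thesis .
qed

lemma (in prob_space) nn_integral_centered_sq_growth_le:
  fixes Y :: "'a \<Rightarrow> 'b::{banach,second_countable_topology}" and Z :: "'a \<Rightarrow> real^'m"
  assumes Y: "integrable M Y" and Z: "Z \<in> borel_measurable M"
    and K: "integrable M (\<lambda>\<omega>. K_rho \<rho> (Z \<omega>))"
    and f: "f \<in> borel_measurable M" "integrable M (\<lambda>\<omega>. (f \<omega>)\<^sup>2)" "\<And>\<omega>. f \<omega> \<ge> 0"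
    and L2: "L2 \<ge> 0"
    and bound: "\<And>\<omega>. norm (Y \<omega> - c) \<le> L2 * (1 + 2 * norm (Z \<omega>)) powr (2 * \<rho> + 2) + f \<omega>"
  shows "(\<integral>\<^sup>+\<omega>. ennreal ((norm (Y \<omega> - expectation Y))\<^sup>2) \<partial>M)
           \<le> ennreal (8 * L2\<^sup>2 * expectation (\<lambda>\<omega>. K_rho \<rho> (Z \<omega>)) + 8 * expectation (\<lambda>\<omega>. (f \<omega>)\<^sup>2))"
proof -
  define u where "u \<omega> = L2 * (1 + 2 * norm (Z \<omega>)) powr (2 * \<rho> + 2) + f \<omega>" for \<omega>
  have u_meas: "u \<in> borel_measurable M" unfolding u_def using Z f(1) by measurable
  have u_sq: "(u \<omega>)\<^sup>2 \<le> 2 * L2\<^sup>2 * K_rho \<rho> (Z \<omega>) + 2 * (f \<omega>)\<^sup>2" for \<omega>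
  proof -
    define p where "p = L2 * (1 + 2 * norm (Z \<omega>)) powr (2 * \<rho> + 2)"
    have "p\<^sup>2 = L2\<^sup>2 * K_rho \<rho> (Z \<omega>)"
      by (simp add: p_def K_rho_def power_mult_distrib power2_eq_square powr_add[symmetric])
    moreover have "(p + f \<omega>)\<^sup>2 \<le> 2 * p\<^sup>2 + 2 * (f \<omega>)\<^sup>2"
      using zero_le_square[of "p - f \<omega>"] by (simp add: power2_eq_square algebra_simps)
    ultimately show ?thesis by (simp add: u_def p_def[symmetric])
  qed
  have u2_int: "integrable M (\<lambda>\<omega>. (u \<omega>)\<^sup>2)"
  proof (rule Bochner_Integration.integrable_bound)
    show "integrable M (\<lambda>\<omega>. 2 * L2\<^sup>2 * K_rho \<rho> (Z \<omega>) + 2 * (f \<omega>)\<^sup>2)" using K f(2) by simp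
    show "AE \<omega> in M. norm ((u \<omega>)\<^sup>2) \<le> norm (2 * L2\<^sup>2 * K_rho \<rho> (Z \<omega>) + 2 * (f \<omega>)\<^sup>2)"
      using u_sq order_trans[OF zero_le_power2 u_sq] by (intro AE_I2) simp
  qed (use u_meas in measurable)
  have "(\<integral>\<^sup>+\<omega>. ennreal ((norm (Y \<omega> - expectation Y))\<^sup>2) \<partial>M) \<le> ennreal (4 * expectation (\<lambda>\<omega>. (u \<omega>)\<^sup>2))"
    using bound unfolding u_def[symmetric]
    by (intro nn_integral_centered_sq_le[OF Y square_integrable_imp_integrable[OF u_meas u2_int] u2_int])
  also have "\<dots> \<le> ennreal (4 * expectation (\<lambda>\<omega>. 2 * L2\<^sup>2 * K_rho \<rho> (Z \<omega>) + 2 * (f \<omega>)\<^sup>2))"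
    using u_sq u2_int K f(2) by (intro ennreal_leI mult_left_mono integral_mono) auto
  also have "\<dots> = ennreal (8 * L2\<^sup>2 * expectation (\<lambda>\<omega>. K_rho \<rho> (Z \<omega>)) + 8 * expectation (\<lambda>\<omega>. (f \<omega>)\<^sup>2))"
    using K f(2) by (simp add: mult.assoc)
  finally show ?thesis .
qed

lemma borel_measurable_uncurry_comp:
  fixes H :: "'t::second_countable_topology \<Rightarrow> 'x::second_countable_topology \<Rightarrow> 'v::topological_space"
  assumes "(\<lambda>(t, x). H t x) \<in> borel_measurable borel"
    and "f \<in> borel_measurable N" "g \<in> borel_measurable N"
  shows "(\<lambda>\<omega>. H (f \<omega>) (g \<omega>)) \<in> borel_measurable N"
  using measurable_compose[OF measurable_Pair[OF assms(2,3)], of "\<lambda>(t, x). H t x"] assms(1)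
  by (simp add: borel_prod)

lemma measurable_sgld:
  assumes H: "(\<lambda>(t, x). H t x) \<in> borel_measurable borel"
    and \<theta>0: "\<theta>0 \<in> borel_measurable N"
    and X: "\<And>i. 1 \<le> i \<Longrightarrow> i \<le> n \<Longrightarrow> X i \<in> borel_measurable N"
    and \<xi>: "\<And>i. 1 \<le> i \<Longrightarrow> i \<le> n \<Longrightarrow> \<xi> i \<in> borel_measurable N"
  shows "sgld H X \<xi> \<beta> lam \<theta>0 n \<in> borel_measurable N"
  using X \<xi>
proof (induction n)
  case 0
  show ?case using \<theta>0 by simp
next
  case (Suc n)
  have \<theta>n: "sgld H X \<xi> \<beta> lam \<theta>0 n \<in> borel_measurable N" using Suc by simp
  have Xn: "X (Suc n) \<in> borel_measurable N" and \<xi>n: "\<xi> (Suc n) \<in> borel_measurable N"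
    using Suc.prems by auto
  have "(\<lambda>\<omega>. H (sgld H X \<xi> \<beta> lam \<theta>0 n \<omega>) (X (Suc n) \<omega>)) \<in> borel_measurable N"
    using H \<theta>n Xn by (rule borel_measurable_uncurry_comp)
  with \<theta>n \<xi>n show ?case
    by (simp add: borel_measurable_add borel_measurable_diff borel_measurable_scaleR)
qed

lemma (in prob_space) indep_sgld_next_data:
  fixes \<theta>0 :: "'a \<Rightarrow> real^'d" and X :: "nat \<Rightarrow> 'a \<Rightarrow> real^'m" and \<xi> :: "nat \<Rightarrow> 'a \<Rightarrow> real^'d"
  assumes H: "(\<lambda>(t, x). H t x) \<in> borel_measurable borel"
    and \<theta>0: "\<theta>0 \<in> borel_measurable M"
    and X: "\<And>n. X n \<in> borel_measurable M"
    and \<xi>: "\<And>n. 1 \<le> n \<Longrightarrow> \<xi> n \<in> borel_measurable M"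
    and indep: "indep_sets (\<lambda>i. case i of Init \<Rightarrow> gen_events M \<theta>0
                                       | Dat n \<Rightarrow> gen_events M (X n)
                                       | Noise n \<Rightarrow> gen_events M (\<xi> n))
                           ({Init} \<union> range Dat \<union> Noise ` {1..})"
  shows "indep_set (gen_events M (sgld H X \<xi> \<beta> lam \<theta>0 j)) (gen_events M (X (Suc j)))"
proof -
  define E where "E i = (case i of Init \<Rightarrow> gen_events M \<theta>0 | Dat n \<Rightarrow> gen_events M (X n)
                                 | Noise n \<Rightarrow> gen_events M (\<xi> n))" for i
  define past where "past = {Init} \<union> Dat ` {1..j} \<union> Noise ` {1..j}"
  define I where "I = case_bool past {Dat (Suc j)}"
  have E_Pow: "(\<Union>i\<in>K. E i) \<subseteq> Pow (space M)" for K
    unfolding E_def gen_events_def by (auto split: sgld_idx.split_asm)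
  have "indep_sets (\<lambda>b. sigma_sets (space M) (\<Union>i\<in>I b. E i)) UNIV"
  proof (rule indep_sets_collect_sigma)
    show "indep_sets E (\<Union>b. I b)"
      by (rule indep_sets_mono_index[OF _ indep[folded E_def]]) (auto simp: I_def past_def UNIV_bool)
    show "Int_stable (E i)" for i
      unfolding E_def by (cases i) (simp_all add: gen_events_Int_stable)
    show "disjoint_family_on I UNIV"
      unfolding disjoint_family_on_def I_def past_def by (auto split: bool.split)
  qed
  then have past_indep: "indep_set (sigma_sets (space M) (\<Union>i\<in>past. E i))
                                   (sigma_sets (space M) (gen_events M (X (Suc j))))"
    unfolding indep_set_def by (rule indep_sets_cong[THEN iffD1, rotated 2])
      (auto split: bool.split simp: I_def E_def)
  have past_meas: "f \<in> borel_measurable (sigma (space M) (\<Union>i\<in>past. E i))"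
    if "i \<in> past" "E i = gen_events M f" for i and f :: "'a \<Rightarrow> 'e::topological_space"
    using that by (intro measurable_sigma_gen_events[OF _ E_Pow]) auto
  have "sgld H X \<xi> \<beta> lam \<theta>0 j \<in> borel_measurable (sigma (space M) (\<Union>i\<in>past. E i))"
  proof (rule measurable_sgld[OF H])
    show "\<theta>0 \<in> borel_measurable (sigma (space M) (\<Union>i\<in>past. E i))"
      by (rule past_meas[of Init]) (auto simp: past_def E_def)
    show "X i \<in> borel_measurable (sigma (space M) (\<Union>i\<in>past. E i))"
      and "\<xi> i \<in> borel_measurable (sigma (space M) (\<Union>i\<in>past. E i))" if "1 \<le> i" "i \<le> j" for i
      using that by (intro past_meas[of "Dat i"] past_meas[of "Noise i"]; simp add: past_def E_def)+
  qed
  then have "gen_events M (sgld H X \<xi> \<beta> lam \<theta>0 j) \<subseteq> sigma_sets (space M) (\<Union>i\<in>past. E i)"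
    using E_Pow by (rule gen_events_subset_sigma_sets)
  then show ?thesis
    unfolding indep_set_def by (intro indep_sets_mono_sets[OF past_indep[unfolded indep_set_def]])
      (auto split: bool.split intro: sigma_sets.Basic)
qed

lemma (in prob_space) nn_integral_sgld_noise_le:
  fixes \<theta>0 :: "'a \<Rightarrow> real^'d" and X :: "nat \<Rightarrow> 'a \<Rightarrow> real^'m" and \<xi> :: "nat \<Rightarrow> 'a \<Rightarrow> real^'d"
    and h :: "real^'d \<Rightarrow> real^'d"
  assumes H: "(\<lambda>(t, x). H t x) \<in> borel_measurable borel"
    and \<theta>0: "\<theta>0 \<in> borel_measurable M"
    and X: "\<And>n. X n \<in> borel_measurable M"
    and X_ident: "\<And>n. distr M borel (X n) = distr M borel (X 0)"
    and \<xi>: "\<And>n. 1 \<le> n \<Longrightarrow> \<xi> n \<in> borel_measurable M"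
    and indep: "indep_sets (\<lambda>i. case i of Init \<Rightarrow> gen_events M \<theta>0
                                       | Dat n \<Rightarrow> gen_events M (X n)
                                       | Noise n \<Rightarrow> gen_events M (\<xi> n))
                           ({Init} \<union> range Dat \<union> Noise ` {1..})"
    and h: "h \<in> borel_measurable borel"
    and fixed: "\<And>t. (\<integral>\<^sup>+\<omega>. ennreal ((norm (H t (X 0 \<omega>) - h t))\<^sup>2) \<partial>M) \<le> B"
  shows "(\<integral>\<^sup>+\<omega>. ennreal ((norm (H (sgld H X \<xi> \<beta> lam \<theta>0 j \<omega>) (X (Suc j) \<omega>)
                                  - h (sgld H X \<xi> \<beta> lam \<theta>0 j \<omega>)))\<^sup>2) \<partial>M) \<le> B"
proof -
  let ?D = "\<lambda>(t, x). ennreal ((norm (H t x - h t))\<^sup>2)"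
  have D_meas: "?D \<in> borel_measurable (borel \<Otimes>\<^sub>M borel)"
    using H h by (simp add: borel_prod[symmetric] case_prod_beta') measurable
  have "(\<integral>\<^sup>+\<omega>. ?D (t, X (Suc j) \<omega>) \<partial>M) \<le> B" for t
    using fixed[of t] measurable_Pair2[OF D_meas, of t] X
    by (subst nn_integral_comp_identically_distributed[OF X_ident]) auto
  then have "(\<integral>\<^sup>+\<omega>. ?D (sgld H X \<xi> \<beta> lam \<theta>0 j \<omega>, X (Suc j) \<omega>) \<partial>M) \<le> B"
    using H \<theta>0 X \<xi> indep
    by (intro nn_integral_indep_le[OF measurable_sgld X _ D_meas] indep_sgld_next_data)
  then show ?thesis by simp
qed

theorem lemmaA1:
  fixes M :: "'w measure"
    and \<theta>0 :: "'w \<Rightarrow> real^'d"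
    and X :: "nat \<Rightarrow> 'w \<Rightarrow> real^'m"
    and \<xi> :: "nat \<Rightarrow> 'w \<Rightarrow> real^'d"
    and H F G :: "real^'d \<Rightarrow> real^'m \<Rightarrow> real^'d"
    and K1 :: "real^'m \<Rightarrow> real"
    and A :: "real^'m \<Rightarrow> real^'d^'d"
    and b :: "real^'m \<Rightarrow> real"
    and \<beta> L1 L2 \<rho> L lam :: real
  defines "h \<equiv> (\<lambda>\<theta>. \<integral>\<omega>. H \<theta> (X 0 \<omega>) \<partial>M)"
    and "a \<equiv> (THE a. smallest_eigenvalue (\<integral>\<omega>. A (X 0 \<omega>) \<partial>M) a)"
    and "bb \<equiv> (\<integral>\<omega>. b (X 0 \<omega>) \<partial>M)"
    and "EK \<equiv> (\<integral>\<omega>. K_rho \<rho> (X 0 \<omega>) \<partial>M)"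
    and "Fstar \<equiv> (\<lambda>x. norm (F 0 0) + K1 x)"
  defines "lmax \<equiv> min (min a (a powr (1/3)) / (24 * (1 + L1)\<^sup>2 * EK)) (1 / (4 * a))"
  defines "c0 \<equiv> 8 * (\<integral>\<omega>. (K1 (X 0 \<omega>))\<^sup>2 \<partial>M) / a + 2 * bb + 4 * lmax * L2\<^sup>2 * EK
                 + 4 * lmax * (\<integral>\<omega>. (Fstar (X 0 \<omega>))\<^sup>2 \<partial>M)"
  defines "c1 \<equiv> c0 + 2 * real CARD('d) / \<beta>"
  defines "sbar \<equiv> 4 * EK * (L\<^sup>2 + L1\<^sup>2)"
    and "stilde \<equiv> 4 * EK * (L\<^sup>2 + L1\<^sup>2) * c1 * (lmax + 1 / a) + 4 * (norm (h 0))\<^sup>2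
                   + 8 * L2\<^sup>2 * EK + 8 * (\<integral>\<omega>. (Fstar (X 0 \<omega>))\<^sup>2 \<partial>M)"
  defines "T \<equiv> nat \<lfloor>1 / lam\<rfloor>"
  defines "\<theta> \<equiv> sgld H X \<xi> \<beta> lam \<theta>0"
  assumes M: "prob_space M"
    and \<beta>_pos: "\<beta> > 0"
    \<comment> \<open>random variables, independence, i.i.d.\<close>
    and \<theta>0_meas: "\<theta>0 \<in> borel_measurable M"
    and X_meas: "\<And>n. X n \<in> borel_measurable M"
    and X_ident: "\<And>n. distr M borel (X n) = distr M borel (X 0)"
    and \<xi>_gauss: "\<And>n. n \<ge> 1 \<Longrightarrow> std_gaussian_vec M (\<xi> n)"
    and indep: "prob_space.indep_sets M
                  (\<lambda>i. case i of Init \<Rightarrow> gen_events M \<theta>0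
                               | Dat n \<Rightarrow> gen_events M (X n)
                               | Noise n \<Rightarrow> gen_events M (\<xi> n))
                  ({Init} \<union> range Dat \<union> Noise ` {1..})"
    \<comment> \<open>H measurable with E|H(theta,X_0)| finite\<close>
    and H_meas: "(\<lambda>(t, x). H t x) \<in> borel_measurable borel"
    and H_int: "\<And>t. integrable M (\<lambda>\<omega>. norm (H t (X 0 \<omega>)))"
    \<comment> \<open>(A1)\<close>
    and A1_split: "\<And>t x. H t x = F t x + G t x"
    and L1_pos: "L1 > 0" and L2_pos: "L2 > 0" and \<rho>_nonneg: "\<rho> \<ge> 0"
    and A1_F: "\<And>t t' x x'. norm (F t x - F t' x')
                 \<le> (1 + norm x + norm x') powr \<rho> * (L1 * norm (t - t') + L2 * norm (x - x'))"
    and K1_nonneg: "\<And>x. K1 x \<ge> 0"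
    and A1_G: "\<And>t x. norm (G t x) \<le> K1 x"
    \<comment> \<open>(A2)\<close>
    and A2_\<theta>0: "integrable M (\<lambda>\<omega>. (norm (\<theta>0 \<omega>)) ^ 4)"
    and A2_X: "integrable M (\<lambda>\<omega>. (norm (X 0 \<omega>)) powr (4 * \<rho> + 4))"
    and A2_K1: "integrable M (\<lambda>\<omega>. (K1 (X 0 \<omega>)) ^ 4)"
    \<comment> \<open>(A3)\<close>
    and L_pos: "L > 0"
    and A3: "\<And>t t'. (\<integral>\<omega>. norm (H t (X 0 \<omega>) - H t' (X 0 \<omega>)) \<partial>M) \<le> L * norm (t - t')"
    \<comment> \<open>(A4)\<close>
    and A4_psd: "\<And>x y. y \<bullet> (A x *v y) \<ge> 0"
    and A4_F: "\<And>t x. F t x \<bullet> t \<ge> t \<bullet> (A x *v t) - b x"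
    and A_int: "integrable M (\<lambda>\<omega>. A (X 0 \<omega>))"
    and EA_sym: "transpose (\<integral>\<omega>. A (X 0 \<omega>) \<partial>M) = (\<integral>\<omega>. A (X 0 \<omega>) \<partial>M)"
    and a_ex: "\<exists>a. smallest_eigenvalue (\<integral>\<omega>. A (X 0 \<omega>) \<partial>M) a"
    and a_pos: "a > 0"
    and b_int: "integrable M (\<lambda>\<omega>. b (X 0 \<omega>))"
    and b_pos: "bb > 0"
    \<comment> \<open>step size\<close>
    and lam_pos: "0 < lam" and lam_lt: "lam < lmax"
  shows "\<forall>n k. 1 \<le> k \<and> k \<le> T \<longrightarrow>
           (\<integral>\<^sup>+\<omega>. ennreal ((norm (H (\<theta> (n * T + k - 1) \<omega>) (X (n * T + k) \<omega>)
                                  - h (\<theta> (n * T + k - 1) \<omega>)))\<^sup>2) \<partial>M)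
           \<le> ennreal (exp (- a * lam * real (n * T)) * sbar * (\<integral>\<omega>. V2 (\<theta>0 \<omega>) \<partial>M) + stilde)"
proof -
  interpret prob_space M by (rule M)
  note X_meas[measurable]
  have lmax_pos: "lmax > 0" using lam_pos lam_lt by simp
  \<comment> \<open>\<open>EK > 0\<close> is forced by \<open>0 < lam < lmax\<close>; it also makes \<open>K_rho \<rho> (X 0)\<close> integrable.\<close>
  have EK_pos: "EK > 0"
  proof (rule ccontr)
    assume "\<not> EK > 0"
    then have "min a (a powr (1/3)) / (24 * (1 + L1)\<^sup>2 * EK) \<le> 0"
      using a_pos by (intro divide_nonneg_nonpos) (auto simp: mult_nonneg_nonpos)
    then show False using lmax_pos unfolding lmax_def by linarith
  qed
  then have K_int: "integrable M (\<lambda>\<omega>. K_rho \<rho> (X 0 \<omega>))"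
    unfolding EK_def using not_integrable_integral_eq by fastforce
  have K1_meas: "(\<lambda>\<omega>. K1 (X 0 \<omega>)) \<in> borel_measurable M"
    by (rule borel_measurable_of_power[OF borel_measurable_integrable[OF A2_K1]]) (simp_all add: K1_nonneg)
  have Fstar_int: "integrable M (\<lambda>\<omega>. (Fstar (X 0 \<omega>))\<^sup>2)"
    unfolding Fstar_def using A2_K1 K1_meas by (rule integrable_shifted_sq_of_power4)
  define B where "B = 8 * L2\<^sup>2 * EK + 8 * (\<integral>\<omega>. (Fstar (X 0 \<omega>))\<^sup>2 \<partial>M)"
  have fixed: "(\<integral>\<^sup>+\<omega>. ennreal ((norm (H t (X 0 \<omega>) - h t))\<^sup>2) \<partial>M) \<le> ennreal B" for t
  proof -
    have "integrable M (\<lambda>\<omega>. H t (X 0 \<omega>))"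
      using H_int[of t] borel_measurable_uncurry_comp[OF H_meas, of "\<lambda>_. t" M "X 0"] by (simp add: integrable_norm_iff)
    moreover have "norm (H t (X 0 \<omega>) - F t 0)
        \<le> L2 * (1 + 2 * norm (X 0 \<omega>)) powr (2 * \<rho> + 2) + Fstar (X 0 \<omega>)" for \<omega>
      using norm_sub_F_origin_le[OF A1_split A1_F A1_G \<rho>_nonneg less_imp_le[OF L2_pos], of t "X 0 \<omega>"]
        norm_ge_zero[of "F 0 0"]
      unfolding Fstar_def by linarith
    ultimately show ?thesis
      unfolding h_def B_def EK_def Fstar_def
      using K_int Fstar_int K1_meas K1_nonneg L2_pos
      by (intro nn_integral_centered_sq_growth_le) (auto simp: Fstar_def)
  qed
  have "case_prod (\<lambda>t \<omega>. H t (X 0 \<omega>)) \<in> borel_measurable (borel \<Otimes>\<^sub>M M)"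
    using borel_measurable_uncurry_comp[OF H_meas, of fst "borel \<Otimes>\<^sub>M M" "\<lambda>p. X 0 (snd p)"]
    by (simp add: case_prod_beta')
  then have h_meas: "h \<in> borel_measurable borel"
    unfolding h_def by (rule borel_measurable_lebesgue_integral)
  have \<xi>_meas: "\<xi> n \<in> borel_measurable M" if "1 \<le> n" for n
    using \<xi>_gauss[OF that] by (simp add: std_gaussian_vec_def)
  have step: "(\<integral>\<^sup>+\<omega>. ennreal ((norm (H (\<theta> (i - 1) \<omega>) (X i \<omega>) - h (\<theta> (i - 1) \<omega>)))\<^sup>2) \<partial>M)
      \<le> ennreal B" if "1 \<le> i" for i
    using nn_integral_sgld_noise_le[OF H_meas \<theta>0_meas X_meas X_ident \<xi>_meas indep h_meas fixed, of _ _ "i - 1"]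
      that unfolding \<theta>_def by simp
  have "B \<le> stilde"
  proof -
    have "c0 \<ge> 0" unfolding c0_def using a_pos b_pos lmax_pos EK_pos by (intro add_nonneg_nonneg) auto
    then have "c1 \<ge> 0" unfolding c1_def using \<beta>_pos by simp
    then show ?thesis unfolding B_def stilde_def using EK_pos lmax_pos a_pos by simp
  qed
  moreover have "0 \<le> exp (- a * lam * real (n * T)) * sbar * (\<integral>\<omega>. V2 (\<theta>0 \<omega>) \<partial>M)" for n
    unfolding sbar_def V2_def using EK_pos by (intro mult_nonneg_nonneg integral_nonneg) auto
  ultimately have B_le: "ennreal B \<le> ennreal (exp (- a * lam * real (n * T)) * sbar * (\<integral>\<omega>. V2 (\<theta>0 \<omega>) \<partial>M) + stilde)"
    for n by (intro ennreal_leI) (meson add_increasing)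
  show ?thesis
    using order_trans[OF step B_le] by auto
qed

end
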